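(* Let $Q$ be a groupoid quantale with base locale $A$, let $X$ be a stably supported $Q$-module with support $\varsigma_X$ and inner product $\langle-,-\rangle$, and let $x\in X$ and $b\in A$ satisfy $b\triangleright1_X\le\langle x,x\rangle\cdot1_X$ and $b\triangleright x=x$. Then $b=\varsigma_X(x)$.
   Context: Let $A$ be a locale. An involutive $A$-$A$-quantale $Q$ is a sup-lattice with commuting unital left and right $A$-actions $a\triangleright q$, $q\triangleleft a$, an associative join-preserving multiplication with $(a\triangleright x)y=a\triangleright(xy)$, $(x\triangleleft a)y=x(a\triangleright y)$, $(xy)\triangleleft a=x(y\triangleleft a)$, and a join-preserving involution with $x^{**}=x$, $(xy)^*=y^*x^*$, $(a\triangleright x\triangleleft b)^*=b\triangleright x^*\triangleleft a$. A support is a sup-lattice homomorphism $\varsigma_Q:Q\to A$ with $\varsigma_Q(1_Q)=1_A$, $\varsigma_Q(x)\triangleright y\le xx^*y$, $\varsigma_Q(x)\triangleright x=x$; equivariant if $\varsigma_Q(a\triangleright x)=a\wedge\varsigma_Q(x)$. A groupoid quantale is such a $Q$ which is a frame with $(a\triangleright q)\wedge m=a\triangleright(q\wedge m)$, $m\wedge(q\triangleleft a)=(q\wedge m)\triangleleft a$, equipped with an equivariant support and a frame homomorphism $\upsilon:Q\to A$ with $\upsilon(a\triangleright1_Q)=a=\upsilon(1_Q\triangleleft a)$, such that the right adjoint of $Q\otimes_AQ\to Q$ preserves joins, $\bigvee_{xy\le a}\upsilon(x)\triangleright y=a$, and $\upsilon(a)\triangleright1_Q=\bigvee_{xx^*\le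 a}x$. A $Q$-module is a locale $X$ with a left $Q$-action $q\cdot x$ and unital left $A$-module structure $a\triangleright x$ satisfying $(a\triangleright q)\cdot x=a\triangleright(q\cdot x)$, $(q\triangleleft a)\cdot x=q\cdot(a\triangleright x)$, $a\triangleright(x\wedge y)=(a\triangleright x)\wedge y$. A pre-Hilbert $Q$-module has $\langle-,-\rangle:X\times X\to Q$ with $\langle q\cdot x,y\rangle=q\langle x,y\rangle$, $a\triangleright\langle x,1_X\rangle=\langle a\triangleright x,1_X\rangle$, $\langle\bigvee x_\alpha,y\rangle=\bigvee\langle x_\alpha,y\rangle$, $\langle x,y\rangle=\langle y,x\rangle^*$. A support is a monotone $\varsigma_X:X\to A$ with $\varsigma_X(1_X)=1_A$, $\varsigma_X(x)\triangleright1_X\le\langle x,x\rangle\cdot1_X$, $\varsigma_X(x)\triangleright x=x$; stable if $\varsigma_X(q\cdot x)\le\varsigma_Q(q)$ for all $q,x$. *)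

theory Defs
  imports Main
begin

text \<open>Sup-lattices are modelled by types of class complete_lattice.
  A locale (frame) is a complete lattice in which binary meets distribute
  over arbitrary joins.\<close>

definition is_frame :: "'a::complete_lattice itself \<Rightarrow> bool" where
  "is_frame _ \<longleftrightarrow> (\<forall>(a::'a) S. inf a (Sup S) = Sup ((\<lambda>s. inf a s) ` S))"

text \<open>Unital left module over a locale A (A viewed as a unital quantale with
  multiplication = meet): the action preserves joins in each variable,
  is associative and unital.\<close>

definition left_loc_module :: "('a::complete_lattice \<Rightarrow> 'm::complete_lattice \<Rightarrow> 'm) \<Rightarrow> bool" where
  "left_loc_module act \<longleftrightarrow>
     (\<forall>a S. act a (Sup S) = Sup (act a ` S)) \<and>
     (\<forall>S m. act (Sup S) m = Sup ((\<lambda>a. act a m) ` S)) \<and>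
     (\<forall>a b m. act (inf a b) m = act a (act b m)) \<and>
     (\<forall>m. act top m = m)"

definition right_loc_module :: "('m::complete_lattice \<Rightarrow> 'a::complete_lattice \<Rightarrow> 'm) \<Rightarrow> bool" where
  "right_loc_module act \<longleftrightarrow>
     (\<forall>a S. act (Sup S) a = Sup ((\<lambda>m. act m a) ` S)) \<and>
     (\<forall>S m. act m (Sup S) = Sup (act m ` S)) \<and>
     (\<forall>a b m. act m (inf a b) = act (act m a) b) \<and>
     (\<forall>m. act m top = m)"

definition inv_AA_quantale ::
  "('a::complete_lattice \<Rightarrow> 'q::complete_lattice \<Rightarrow> 'q) \<Rightarrow> ('q \<Rightarrow> 'a \<Rightarrow> 'q)
   \<Rightarrow> ('q \<Rightarrow> 'q \<Rightarrow> 'q) \<Rightarrow> ('q \<Rightarrow> 'q) \<Rightarrow> bool" where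
  "inv_AA_quantale la ra mult invl \<longleftrightarrow>
     left_loc_module la \<and> right_loc_module ra \<and>
     (\<forall>a b q. ra (la a q) b = la a (ra q b)) \<and>
     (\<forall>x y z. mult (mult x y) z = mult x (mult y z)) \<and>
     (\<forall>S y. mult (Sup S) y = Sup ((\<lambda>x. mult x y) ` S)) \<and>
     (\<forall>x S. mult x (Sup S) = Sup (mult x ` S)) \<and>
     (\<forall>a x y. mult (la a x) y = la a (mult x y)) \<and>
     (\<forall>a x y. mult (ra x a) y = mult x (la a y)) \<and>
     (\<forall>a x y. ra (mult x y) a = mult x (ra y a)) \<and>
     (\<forall>S. invl (Sup S) = Sup (invl ` S)) \<and>
     (\<forall>x. invl (invl x) = x) \<and>
     (\<forall>x y. invl (mult x y) = mult (invl y) (invl x)) \<and>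
     (\<forall>a b x. invl (ra (la a x) b) = ra (la b (invl x)) a)"

definition quantale_support ::
  "('a::complete_lattice \<Rightarrow> 'q::complete_lattice \<Rightarrow> 'q) \<Rightarrow> ('q \<Rightarrow> 'q \<Rightarrow> 'q) \<Rightarrow> ('q \<Rightarrow> 'q)
   \<Rightarrow> ('q \<Rightarrow> 'a) \<Rightarrow> bool" where
  "quantale_support la mult invl supp \<longleftrightarrow>
     (\<forall>S. supp (Sup S) = Sup (supp ` S)) \<and>
     supp top = top \<and>
     (\<forall>x y. la (supp x) y \<le> mult (mult x (invl x)) y) \<and>
     (\<forall>x. la (supp x) x = x)"

definition equivariant_support ::
  "('a::complete_lattice \<Rightarrow> 'q::complete_lattice \<Rightarrow> 'q) \<Rightarrow> ('q \<Rightarrow> 'a) \<Rightarrow> bool" where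
  "equivariant_support la supp \<longleftrightarrow> (\<forall>a x. supp (la a x) = inf a (supp x))"

definition frame_hom :: "('q::complete_lattice \<Rightarrow> 'a::complete_lattice) \<Rightarrow> bool" where
  "frame_hom f \<longleftrightarrow> (\<forall>S. f (Sup S) = Sup (f ` S)) \<and> (\<forall>x y. f (inf x y) = inf (f x) (f y))
                    \<and> f top = top"

text \<open>The tensor product Q \<otimes>_A Q of the right A-module Q with the left A-module Q,
  presented (Joyal--Tierney) as the sup-lattice of subsets T of Q \<times> Q that are
  down-closed, closed under joins in each coordinate, and A-balanced
  (the pair (x,y) in T represents the generator x \<otimes> y being below T).\<close>

definition tensor_elem ::
  "('a::complete_lattice \<Rightarrow> 'q::complete_lattice \<Rightarrow> 'q) \<Rightarrow> ('q \<Rightarrow> 'a \<Rightarrow> 'q) \<Rightarrow> ('q \<times> 'q) set \<Rightarrow> bool" where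
  "tensor_elem la ra T \<longleftrightarrow>
     (\<forall>x y x' y'. (x', y') \<in> T \<longrightarrow> x \<le> x' \<longrightarrow> y \<le> y' \<longrightarrow> (x, y) \<in> T) \<and>
     (\<forall>S y. (\<forall>s\<in>S. (s, y) \<in> T) \<longrightarrow> (Sup S, y) \<in> T) \<and>
     (\<forall>x S. (\<forall>s\<in>S. (x, s) \<in> T) \<longrightarrow> (x, Sup S) \<in> T) \<and>
     (\<forall>x a y. (ra x a, y) \<in> T \<longleftrightarrow> (x, la a y) \<in> T)"

definition tensor_join ::
  "('a::complete_lattice \<Rightarrow> 'q::complete_lattice \<Rightarrow> 'q) \<Rightarrow> ('q \<Rightarrow> 'a \<Rightarrow> 'q) \<Rightarrow> ('q \<times> 'q) set set
   \<Rightarrow> ('q \<times> 'q) set" where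
  "tensor_join la ra F = \<Inter> {T. tensor_elem la ra T \<and> \<Union> F \<subseteq> T}"

text \<open>Right adjoint of the multiplication map Q \<otimes>_A Q \<rightarrow> Q, x \<otimes> y \<mapsto> xy.\<close>
definition mult_radj :: "('q::complete_lattice \<Rightarrow> 'q \<Rightarrow> 'q) \<Rightarrow> 'q \<Rightarrow> ('q \<times> 'q) set" where
  "mult_radj mult q = {(x, y). mult x y \<le> q}"

definition groupoid_quantale ::
  "('a::complete_lattice \<Rightarrow> 'q::complete_lattice \<Rightarrow> 'q) \<Rightarrow> ('q \<Rightarrow> 'a \<Rightarrow> 'q)
   \<Rightarrow> ('q \<Rightarrow> 'q \<Rightarrow> 'q) \<Rightarrow> ('q \<Rightarrow> 'q) \<Rightarrow> ('q \<Rightarrow> 'a) \<Rightarrow> ('q \<Rightarrow> 'a) \<Rightarrow> bool" where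
  "groupoid_quantale la ra mult invl supp ups \<longleftrightarrow>
     inv_AA_quantale la ra mult invl \<and>
     is_frame TYPE('q) \<and>
     (\<forall>a q m. inf (la a q) m = la a (inf q m)) \<and>
     (\<forall>a q m. inf m (ra q a) = ra (inf q m) a) \<and>
     quantale_support la mult invl supp \<and> equivariant_support la supp \<and>
     frame_hom ups \<and>
     (\<forall>a. ups (la a top) = a \<and> ups (ra top a) = a) \<and>
     (\<forall>K. mult_radj mult (Sup K) = tensor_join la ra (mult_radj mult ` K)) \<and>
     (\<forall>q. Sup {la (ups x) y | x y. mult x y \<le> q} = q) \<and>
     (\<forall>q. la (ups q) top = Sup {x. mult x (invl x) \<le> q})"

definition Q_module ::
  "('a::complete_lattice \<Rightarrow> 'q::complete_lattice \<Rightarrow> 'q) \<Rightarrow> ('q \<Rightarrow> 'a \<Rightarrow> 'q) \<Rightarrow> ('q \<Rightarrow> 'q \<Rightarrow> 'q)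
   \<Rightarrow> ('q \<Rightarrow> 'x::complete_lattice \<Rightarrow> 'x) \<Rightarrow> ('a \<Rightarrow> 'x \<Rightarrow> 'x) \<Rightarrow> bool" where
  "Q_module la ra mult qa xa \<longleftrightarrow>
     is_frame TYPE('x) \<and>
     (\<forall>S x. qa (Sup S) x = Sup ((\<lambda>q. qa q x) ` S)) \<and>
     (\<forall>q S. qa q (Sup S) = Sup (qa q ` S)) \<and>
     (\<forall>q r x. qa (mult q r) x = qa q (qa r x)) \<and>
     left_loc_module xa \<and>
     (\<forall>a q x. qa (la a q) x = xa a (qa q x)) \<and>
     (\<forall>a q x. qa (ra q a) x = qa q (xa a x)) \<and>
     (\<forall>a x y. xa a (inf x y) = inf (xa a x) y)"

definition pre_hilbert ::
  "('a::complete_lattice \<Rightarrow> 'q::complete_lattice \<Rightarrow> 'q) \<Rightarrow> ('q \<Rightarrow> 'q \<Rightarrow> 'q) \<Rightarrow> ('q \<Rightarrow> 'q)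
   \<Rightarrow> ('q \<Rightarrow> 'x::complete_lattice \<Rightarrow> 'x) \<Rightarrow> ('a \<Rightarrow> 'x \<Rightarrow> 'x) \<Rightarrow> ('x \<Rightarrow> 'x \<Rightarrow> 'q) \<Rightarrow> bool" where
  "pre_hilbert la mult invl qa xa ip \<longleftrightarrow>
     (\<forall>q x y. ip (qa q x) y = mult q (ip x y)) \<and>
     (\<forall>a x. la a (ip x top) = ip (xa a x) top) \<and>
     (\<forall>S y. ip (Sup S) y = Sup ((\<lambda>x. ip x y) ` S)) \<and>
     (\<forall>x y. ip x y = invl (ip y x))"

definition module_support ::
  "('q::complete_lattice \<Rightarrow> 'x::complete_lattice \<Rightarrow> 'x) \<Rightarrow> ('a::complete_lattice \<Rightarrow> 'x \<Rightarrow> 'x)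
   \<Rightarrow> ('x \<Rightarrow> 'x \<Rightarrow> 'q) \<Rightarrow> ('x \<Rightarrow> 'a) \<Rightarrow> bool" where
  "module_support qa xa ip suppX \<longleftrightarrow>
     mono suppX \<and> suppX top = top \<and>
     (\<forall>x. xa (suppX x) top \<le> qa (ip x x) top) \<and>
     (\<forall>x. xa (suppX x) x = x)"

definition stable_support ::
  "('q::complete_lattice \<Rightarrow> 'x::complete_lattice \<Rightarrow> 'x) \<Rightarrow> ('q \<Rightarrow> 'a::complete_lattice)
   \<Rightarrow> ('x \<Rightarrow> 'a) \<Rightarrow> bool" where
  "stable_support qa supp suppX \<longleftrightarrow> (\<forall>q x. suppX (qa q x) \<le> supp q)"

end

theory Submission
  imports Defs
begin

text \<open>The map \<open>a \<mapsto> a \<triangleright> 1\<^sub>X\<close> reflects the order: stability forces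
  \<open>\<varsigma>\<^sub>Q \<langle>1,1\<rangle> = 1\<close>, so by equivariance \<open>a = \<varsigma>\<^sub>Q (a \<triangleright> \<langle>1,1\<rangle>) = \<varsigma>\<^sub>Q \<langle>a \<triangleright> 1, 1\<rangle>\<close>, which is monotone
  in \<open>a \<triangleright> 1\<close>. On the other hand, if \<open>d \<triangleright> x = x\<close> then
  \<open>\<langle>x,x\<rangle> \<le> \<langle>x,1\<rangle> = \<langle>d \<triangleright> x,1\<rangle> = d \<triangleright> \<langle>x,1\<rangle>\<close>, whence \<open>\<langle>x,x\<rangle> \<cdot> 1 \<le> d \<triangleright> 1\<close>.
  So any \<open>c\<close> with \<open>c \<triangleright> 1 \<le> \<langle>x,x\<rangle> \<cdot> 1\<close> lies below any \<open>d\<close> fixing \<open>x\<close>; both \<open>b\<close> and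
  \<open>\<varsigma>\<^sub>X x\<close> are of either kind.\<close>

lemma Sup_preserving_mono:
  fixes f :: "'a::complete_lattice \<Rightarrow> 'b::complete_lattice"
  assumes "\<forall>S. f (Sup S) = Sup (f ` S)"
  shows "mono f"
proof
  fix x y :: 'a
  assume "x \<le> y"
  then have "f y = f (Sup {x, y})" by (simp add: sup_absorb2)
  also have "\<dots> = Sup {f x, f y}" using assms by (metis image_insert image_empty)
  also have "\<dots> = sup (f x) (f y)" by simp
  finally show "f x \<le> f y" by (metis sup_ge1)
qed

lemma quantale_support_mono:
  "quantale_support la mult invl supp \<Longrightarrow> mono supp"
  unfolding quantale_support_def by (intro Sup_preserving_mono) blast

lemma pre_hilbert_mono_left:
  assumes "pre_hilbert la mult invl qa xa ip"
  shows "mono (\<lambda>y. ip y w)"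
  using assms unfolding pre_hilbert_def by (intro Sup_preserving_mono) blast

lemma inner_le_inner_top:
  assumes "inv_AA_quantale la ra mult invl" and "pre_hilbert la mult invl qa xa ip"
  shows "ip y w \<le> ip y top"
proof -
  have "mono invl"
    using assms(1) unfolding inv_AA_quantale_def by (intro Sup_preserving_mono) blast
  moreover have "ip w y \<le> ip top y"
    using monoD[OF pre_hilbert_mono_left[OF assms(2)]] by simp
  ultimately have "invl (ip w y) \<le> invl (ip top y)" by (simp add: monoD)
  then show ?thesis
    using assms(2) unfolding pre_hilbert_def by metis
qed

lemma inner_square_action_top_le_fixing:
  assumes "inv_AA_quantale la ra mult invl" and "Q_module la ra mult qa xa"
    and "pre_hilbert la mult invl qa xa ip" and "xa d x = x"
  shows "qa (ip x x) top \<le> xa d top"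
proof -
  have qa_mono: "mono (\<lambda>q. qa q y)" for y
    using assms(2) unfolding Q_module_def by (intro Sup_preserving_mono) blast
  have xa_mono: "mono (xa a)" for a
    using assms(2) unfolding Q_module_def left_loc_module_def
    by (intro Sup_preserving_mono) blast
  have "ip x x \<le> ip x top"
    using assms(1,3) by (rule inner_le_inner_top)
  also have "\<dots> = la d (ip x top)"
    using assms(3,4) unfolding pre_hilbert_def by metis
  finally have "qa (ip x x) top \<le> qa (la d (ip x top)) top"
    using monoD[OF qa_mono] by simp
  also have "\<dots> = xa d (qa (ip x top) top)"
    using assms(2) unfolding Q_module_def by blast
  also have "\<dots> \<le> xa d top"
    using monoD[OF xa_mono] by simp
  finally show ?thesis .
qed

lemma supp_inner_top_top:
  assumes "module_support qa xa ip suppX" and "stable_support qa supp suppX"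
  shows "supp (ip top top) = top"
proof -
  have "top = xa (suppX top) top"
    using assms(1) unfolding module_support_def by metis
  also have "\<dots> \<le> qa (ip top top) top"
    using assms(1) unfolding module_support_def by blast
  finally have "qa (ip top top) top = top"
    by (simp add: top_le)
  then have "suppX top \<le> supp (ip top top)"
    using assms(2) unfolding stable_support_def by metis
  then show ?thesis
    using assms(1) unfolding module_support_def by (simp add: top_le)
qed

lemma action_top_le_imp_le:
  assumes "quantale_support la mult invl supp" and "equivariant_support la supp"
    and "pre_hilbert la mult invl qa xa ip"
    and "module_support qa xa ip suppX" and "stable_support qa supp suppX"
    and "xa a top \<le> xa c top"
  shows "a \<le> c"
proof -
  have la_inner: "la e (ip top top) = ip (xa e top) top" for e
    using assms(3) unfolding pre_hilbert_def by blast
  have "la a (ip top top) \<le> la c (ip top top)"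
    unfolding la_inner using monoD[OF pre_hilbert_mono_left[OF assms(3)] assms(6)] .
  then have "supp (la a (ip top top)) \<le> supp (la c (ip top top))"
    using quantale_support_mono[OF assms(1)] by (simp add: monoD)
  then show ?thesis
    using assms(2) supp_inner_top_top[OF assms(4,5)] unfolding equivariant_support_def by simp
qed

theorem lemma4p4:
  fixes la :: "'a::complete_lattice \<Rightarrow> 'q::complete_lattice \<Rightarrow> 'q"
    and ra :: "'q \<Rightarrow> 'a \<Rightarrow> 'q"
    and mult :: "'q \<Rightarrow> 'q \<Rightarrow> 'q"
    and invl :: "'q \<Rightarrow> 'q"
    and supp :: "'q \<Rightarrow> 'a"
    and ups :: "'q \<Rightarrow> 'a"
    and qa :: "'q \<Rightarrow> 'x::complete_lattice \<Rightarrow> 'x"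
    and xa :: "'a \<Rightarrow> 'x \<Rightarrow> 'x"
    and ip :: "'x \<Rightarrow> 'x \<Rightarrow> 'q"
    and suppX :: "'x \<Rightarrow> 'a"
    and x :: 'x and b :: 'a
  assumes "is_frame TYPE('a)"
    and "groupoid_quantale la ra mult invl supp ups"
    and "Q_module la ra mult qa xa"
    and "pre_hilbert la mult invl qa xa ip"
    and "module_support qa xa ip suppX"
    and "stable_support qa supp suppX"
    and "xa b top \<le> qa (ip x x) top"
    and "xa b x = x"
  shows "b = suppX x"
proof -
  have Q: "inv_AA_quantale la ra mult invl" "quantale_support la mult invl supp"
      "equivariant_support la supp"
    using assms(2) unfolding groupoid_quantale_def by blast+
  have le_fixing: "c \<le> d" if "xa c top \<le> qa (ip x x) top" and "xa d x = x" for c d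
    using action_top_le_imp_le[OF Q(2,3) assms(4-6)]
      inner_square_action_top_le_fixing[OF Q(1) assms(3,4) that(2)] that(1)
    by (meson order_trans)
  have "b \<le> suppX x"
    using le_fixing assms(5,7) unfolding module_support_def by blast
  moreover have "suppX x \<le> b"
    using le_fixing assms(5,8) unfolding module_support_def by blast
  ultimately show ?thesis by simp
qed

end
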